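(* Let $N_0,B,T_c,G_c,p_r,p_d,p_s,C_0>0$ and $\alpha>1$, with $T=BT_c$ an integer greater than $1$, and let $R>0$. Set $\rho_r=\frac{G_cp_r}{N_0B}$, $\rho_d=\frac{G_cp_d}{N_0B}$, $\rho_s=\frac{G_cp_s}{N_0B}$, $\rho_0=\frac{G_cC_0}{N_0}$, $\Theta=(\alpha,\rho_r,\rho_d,\rho_s,\rho_0,T)$. Suppose $$\rho_r+2\rho_0\ \ge\ \frac{\alpha}{1+\lfloor\sqrt T\rfloor}+\frac{\alpha(1+\lfloor\sqrt T\rfloor)}{\lfloor\sqrt T\rfloor}\Big(2^{\frac{R}{1-\lfloor\sqrt T\rfloor/T}}-1\Big).$$ Let $\eta^\star_{zf}(R,\Theta)=\frac{G_c}{N_0}\zeta^\star_{zf}(R,\Theta)$ and $$e(R,\Theta)=\frac{RB}{2p_r+p_d+p_s+4C_0B+\frac{32}{3}\frac{C_0}{T_c}}.$$ Then $\frac23 e(R,\Theta)<\eta^\star_{zf}(R,\Theta)<e(R,\Theta)$.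
   Context: For $M>K$, $1\le K\le\tau<T$ let $$\gamma_u=\frac{K+\tau}{2\tau(M-K)}\Big(2^{\frac{R}{K(1-\tau/T)}}-1\Big)+\sqrt{\Big(\frac{K+\tau}{2\tau(M-K)}\Big(2^{\frac{R}{K(1-\tau/T)}}-1\Big)\Big)^2+\frac{2^{\frac{R}{K(1-\tau/T)}}-1}{\tau(M-K)}}$$ and define $\zeta_{zf}(M,K,\tau,R,\Theta)>0$ by $$\frac{R}{\zeta_{zf}(M,K,\tau,R,\Theta)}=\alpha K\gamma_u+\rho_s+K\Big(\rho_d+\frac{8K^2\rho_0}{3T}\Big)+M\Big(\rho_r+2K\rho_0+\frac{4K^2\rho_0}{T}\Big).$$ $\zeta^\star_{zf}(R,\Theta)$ is the maximum of $\zeta_{zf}$ over integers $(M,K,\tau)$ with $1\le K\le\tau<T$, $M>K$. *)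

theory Defs
  imports Complex_Main
begin

definition gamma_u :: "nat \<Rightarrow> nat \<Rightarrow> nat \<Rightarrow> real \<Rightarrow> nat \<Rightarrow> real" where
  "gamma_u M K tau R T =
    (let c = 2 powr (R / (real K * (1 - real tau / real T))) - 1;
         a = (real K + real tau) / (2 * real tau * (real M - real K)) * c
     in a + sqrt (a\<^sup>2 + c / (real tau * (real M - real K))))"

definition zeta_zf :: "nat \<Rightarrow> nat \<Rightarrow> nat \<Rightarrow> real \<Rightarrow>
    real \<Rightarrow> real \<Rightarrow> real \<Rightarrow> real \<Rightarrow> real \<Rightarrow> nat \<Rightarrow> real" where
  "zeta_zf M K tau R alpha rho_r rho_d rho_s rho_0 T =
     R / (alpha * real K * gamma_u M K tau R T + rho_s
          + real K * (rho_d + 8 * (real K)\<^sup>2 * rho_0 / (3 * real T))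
          + real M * (rho_r + 2 * real K * rho_0 + 4 * (real K)\<^sup>2 * rho_0 / real T))"

text \<open>zeta*_zf: the maximum (taken as supremum) of zeta_zf over integer triples
  (M,K,tau) with 1 <= K <= tau < T and M > K.\<close>
definition zeta_star_zf :: "real \<Rightarrow> real \<Rightarrow> real \<Rightarrow> real \<Rightarrow> real \<Rightarrow> real \<Rightarrow> nat \<Rightarrow> real" where
  "zeta_star_zf R alpha rho_r rho_d rho_s rho_0 T =
     Sup {zeta_zf M K tau R alpha rho_r rho_d rho_s rho_0 T | M K tau :: nat.
          1 \<le> K \<and> K \<le> tau \<and> tau < T \<and> K < M}"

end

theory Submission
  imports Defs
begin

text \<open>Write \<open>zeta_zf = R / zf_denom\<close> and let \<open>D = zf_denom_base\<close> be the value of the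
  denominator at \<open>(M, K) = (2, 1)\<close> without its \<open>alpha * gamma_u\<close> term; after rescaling by
  \<open>Gc / N0\<close>, \<open>R / D\<close> is exactly \<open>e\<close>. Every admissible triple has denominator at least
  \<open>D + min rho_r (alpha * (2 powr R - 1))\<close>: for \<open>M \<ge> 3\<close> the extra \<open>rho_r\<close> pays for it, and for
  \<open>(M, K) = (2, 1)\<close> one has \<open>gamma_u \<ge> 2 powr R - 1\<close>. This uniform gap keeps the supremum
  strictly below \<open>R / D\<close>. For the lower bound take \<open>(2, 1, \<lfloor>sqrt T\<rfloor>)\<close>: there
  \<open>gamma_u = a + sqrt (a\<^sup>2 + 2 a / (1 + tau)) < 2 a + 1 / (1 + tau)\<close>, so the hypothesis gives
  \<open>alpha * gamma_u < rho_r + 2 rho_0 \<le> D / 2\<close>, i.e. a denominator below \<open>3 D / 2\<close>.\<close>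

lemma add_sqrt_square_add_ge:
  fixes a b :: real
  assumes "0 \<le> a" "0 \<le> b"
  shows "2 * a \<le> a + sqrt (a\<^sup>2 + b)"
proof -
  have "a = sqrt (a\<^sup>2)" using assms(1) by simp
  also have "\<dots> \<le> sqrt (a\<^sup>2 + b)" using assms(2) by (simp only: real_sqrt_le_mono le_add_same_cancel1)
  finally show ?thesis by simp
qed

lemma add_sqrt_square_add_less:
  fixes a e :: real
  assumes "0 \<le> a" "0 < e"
  shows "a + sqrt (a\<^sup>2 + 2 * a * e) < 2 * a + e"
proof -
  have "a\<^sup>2 + 2 * a * e < (a + e)\<^sup>2" using assms(2) by (simp add: power2_sum)
  hence "sqrt (a\<^sup>2 + 2 * a * e) < sqrt ((a + e)\<^sup>2)" by (rule real_sqrt_less_mono)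
  also have "\<dots> = a + e" using assms by simp
  finally show ?thesis by simp
qed

lemma powr_rate_minus_one_nonneg:
  assumes "tau < T" "0 \<le> R"
  shows "0 \<le> 2 powr (R / (real K * (1 - real tau / real T))) - 1"
proof -
  have "0 < 1 - real tau / real T" using assms by (simp add: field_simps)
  hence "0 \<le> R / (real K * (1 - real tau / real T))" using assms by simp
  thus ?thesis using ge_one_powr_ge_zero[of 2] by simp
qed

lemma powr_rate_minus_one_ge:
  assumes "tau < T" "0 \<le> R"
  shows "2 powr R - 1 \<le> 2 powr (R / (1 - real tau / real T)) - 1"
proof -
  have "0 < 1 - real tau / real T" "1 - real tau / real T \<le> 1"
    using assms by (simp_all add: field_simps)
  hence "R \<le> R / (1 - real tau / real T)" using assms(2) by (simp add: field_simps)
  thus ?thesis by simp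
qed

lemma gamma_u_nonneg:
  assumes "K < M" "tau < T" "0 \<le> R"
  shows "0 \<le> gamma_u M K tau R T"
proof -
  define c where "c = 2 powr (R / (real K * (1 - real tau / real T))) - 1"
  define a where "a = (real K + real tau) / (2 * real tau * (real M - real K)) * c"
  have "0 \<le> c" unfolding c_def using powr_rate_minus_one_nonneg[OF assms(2,3)] .
  moreover have "0 < real M - real K" using assms(1) by simp
  ultimately have "0 \<le> a" "0 \<le> c / (real tau * (real M - real K))"
    unfolding a_def by simp_all
  moreover have "gamma_u M K tau R T = a + sqrt (a\<^sup>2 + c / (real tau * (real M - real K)))"
    unfolding gamma_u_def Let_def c_def a_def ..
  ultimately show ?thesis by (simp add: add_nonneg_nonneg)
qed

lemma gamma_u_2_1_ge:
  assumes "0 < tau" "tau < T" "0 \<le> R"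
  shows "2 powr R - 1 \<le> gamma_u 2 1 tau R T"
proof -
  define c where "c = 2 powr (R / (1 - real tau / real T)) - 1"
  define a where "a = (1 + real tau) / (2 * real tau) * c"
  have c: "2 powr R - 1 \<le> c" unfolding c_def using powr_rate_minus_one_ge[OF assms(2,3)] .
  have "0 \<le> c" using c ge_one_powr_ge_zero[of 2 R] assms(3) by simp
  hence "0 \<le> a" "0 \<le> c / real tau" unfolding a_def by simp_all
  have "c \<le> (1 + real tau) / real tau * c" using \<open>0 \<le> c\<close> assms(1) by (simp add: field_simps)
  also have "\<dots> = 2 * a" unfolding a_def using assms(1) by simp
  also have "\<dots> \<le> a + sqrt (a\<^sup>2 + c / real tau)"
    using add_sqrt_square_add_ge[OF \<open>0 \<le> a\<close> \<open>0 \<le> c / real tau\<close>] .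
  also have "\<dots> = gamma_u 2 1 tau R T" unfolding gamma_u_def Let_def c_def a_def by simp
  finally show ?thesis using c by simp
qed

lemma gamma_u_2_1_less:
  assumes "0 < tau" "tau < T" "0 \<le> R"
  shows "gamma_u 2 1 tau R T
    < 1 / (1 + real tau) + (1 + real tau) / real tau * (2 powr (R / (1 - real tau / real T)) - 1)"
proof -
  define c where "c = 2 powr (R / (1 - real tau / real T)) - 1"
  define a where "a = (1 + real tau) / (2 * real tau) * c"
  have "0 \<le> c" unfolding c_def using powr_rate_minus_one_nonneg[OF assms(2,3), of 1] by simp
  hence "0 \<le> a" unfolding a_def by simp
  \<comment> \<open>The radicand is a square up to the missing term \<open>(1 / (1 + tau))\<^sup>2\<close>.\<close>
  have "c / real tau = 2 * a * (1 / (1 + real tau))" unfolding a_def using assms(1) by simp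
  hence "gamma_u 2 1 tau R T = a + sqrt (a\<^sup>2 + 2 * a * (1 / (1 + real tau)))"
    unfolding gamma_u_def Let_def c_def a_def by simp
  also have "\<dots> < 2 * a + 1 / (1 + real tau)"
    by (rule add_sqrt_square_add_less) (use \<open>0 \<le> a\<close> in simp_all)
  also have "2 * a = (1 + real tau) / real tau * c" unfolding a_def using assms(1) by simp
  finally show ?thesis unfolding c_def by simp
qed

definition zf_denom :: "nat \<Rightarrow> nat \<Rightarrow> nat \<Rightarrow> real \<Rightarrow>
    real \<Rightarrow> real \<Rightarrow> real \<Rightarrow> real \<Rightarrow> real \<Rightarrow> nat \<Rightarrow> real" where
  "zf_denom M K tau R alpha rho_r rho_d rho_s rho_0 T =
     alpha * real K * gamma_u M K tau R T + rho_s
     + real K * (rho_d + 8 * (real K)\<^sup>2 * rho_0 / (3 * real T))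
     + real M * (rho_r + 2 * real K * rho_0 + 4 * (real K)\<^sup>2 * rho_0 / real T)"

definition zf_denom_base :: "real \<Rightarrow> real \<Rightarrow> real \<Rightarrow> real \<Rightarrow> nat \<Rightarrow> real" where
  "zf_denom_base rho_r rho_d rho_s rho_0 T =
     2 * rho_r + rho_d + rho_s + 4 * rho_0 + 32 * rho_0 / (3 * real T)"

lemma zeta_zf_eq_divide_zf_denom:
  "zeta_zf M K tau R alpha rho_r rho_d rho_s rho_0 T
     = R / zf_denom M K tau R alpha rho_r rho_d rho_s rho_0 T"
  unfolding zeta_zf_def zf_denom_def ..

lemma zf_denom_2_1:
  "zf_denom 2 1 tau R alpha rho_r rho_d rho_s rho_0 T
     = alpha * gamma_u 2 1 tau R T + zf_denom_base rho_r rho_d rho_s rho_0 T"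
  unfolding zf_denom_def zf_denom_base_def by (simp add: field_simps)

lemma zf_denom_ge_base_add_rho_r:
  assumes "3 \<le> M" "1 \<le> K" "K < M" "tau < T" "0 \<le> R" "0 \<le> alpha"
    and "0 \<le> rho_r" "0 \<le> rho_d" "0 \<le> rho_0"
  shows "zf_denom_base rho_r rho_d rho_s rho_0 T + rho_r
           \<le> zf_denom M K tau R alpha rho_r rho_d rho_s rho_0 T"
proof -
  define k m q where "k = real K" and "m = real M" and "q = rho_0 / real T"
  have "1 \<le> k" "3 \<le> m" "0 \<le> q" using assms unfolding k_def m_def q_def by simp_all
  have "1 \<le> k\<^sup>2" using \<open>1 \<le> k\<close> by (simp add: one_le_power)
  hence "1 \<le> k * k\<^sup>2" using \<open>1 \<le> k\<close> mult_mono[of 1 k 1 "k\<^sup>2"] by simp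
  hence "3 \<le> m * k" "3 \<le> m * k\<^sup>2" using \<open>1 \<le> k\<close> \<open>3 \<le> m\<close> mult_mono[of 3 m 1] by fastforce+
  have "0 \<le> alpha * k * gamma_u M K tau R T"
    using assms gamma_u_nonneg[OF assms(3-5)] \<open>1 \<le> k\<close> by simp
  moreover have "1 * rho_d \<le> k * rho_d" using \<open>1 \<le> k\<close> assms(8) by (rule mult_right_mono)
  moreover have "1 * q \<le> (k * k\<^sup>2) * q" using \<open>1 \<le> k * k\<^sup>2\<close> \<open>0 \<le> q\<close> by (rule mult_right_mono)
  moreover have "3 * rho_r \<le> m * rho_r" using \<open>3 \<le> m\<close> assms(7) by (rule mult_right_mono)
  moreover have "3 * rho_0 \<le> (m * k) * rho_0" using \<open>3 \<le> m * k\<close> assms(9) by (rule mult_right_mono)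
  moreover have "3 * q \<le> (m * k\<^sup>2) * q" using \<open>3 \<le> m * k\<^sup>2\<close> \<open>0 \<le> q\<close> by (rule mult_right_mono)
  moreover have "zf_denom M K tau R alpha rho_r rho_d rho_s rho_0 T
      = alpha * k * gamma_u M K tau R T + rho_s + k * rho_d + 8 / 3 * ((k * k\<^sup>2) * q)
        + m * rho_r + 2 * ((m * k) * rho_0) + 4 * ((m * k\<^sup>2) * q)"
    unfolding zf_denom_def k_def m_def q_def by (simp add: field_simps)
  moreover have "zf_denom_base rho_r rho_d rho_s rho_0 T
      = 2 * rho_r + rho_d + rho_s + 4 * rho_0 + 32 / 3 * q"
    unfolding zf_denom_base_def q_def by simp
  ultimately show ?thesis using assms \<open>0 \<le> q\<close> by linarith
qed

lemma zf_denom_ge_base_add_gap: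
  assumes "1 \<le> K" "K \<le> tau" "tau < T" "K < M" "0 \<le> R" "0 \<le> alpha"
    and "0 \<le> rho_r" "0 \<le> rho_d" "0 \<le> rho_0"
  shows "zf_denom_base rho_r rho_d rho_s rho_0 T + min rho_r (alpha * (2 powr R - 1))
           \<le> zf_denom M K tau R alpha rho_r rho_d rho_s rho_0 T"
proof (cases "M = 2")
  case True
  hence "K = 1" using assms by simp
  have "alpha * (2 powr R - 1) \<le> alpha * gamma_u 2 1 tau R T"
    using gamma_u_2_1_ge[of tau T R] assms \<open>K = 1\<close> by (simp add: mult_left_mono)
  thus ?thesis unfolding True \<open>K = 1\<close> zf_denom_2_1 by linarith
next
  case False
  hence "3 \<le> M" using assms by simp
  hence "zf_denom_base rho_r rho_d rho_s rho_0 T + rho_r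
           \<le> zf_denom M K tau R alpha rho_r rho_d rho_s rho_0 T"
    using assms by (intro zf_denom_ge_base_add_rho_r) simp_all
  thus ?thesis by linarith
qed

lemma zeta_zf_le_divide_base_add_gap:
  assumes "1 \<le> K" "K \<le> tau" "tau < T" "K < M" "0 < R" "0 < alpha"
    and "0 < rho_r" "0 \<le> rho_d" "0 \<le> rho_s" "0 \<le> rho_0"
  shows "zeta_zf M K tau R alpha rho_r rho_d rho_s rho_0 T
           \<le> R / (zf_denom_base rho_r rho_d rho_s rho_0 T + min rho_r (alpha * (2 powr R - 1)))"
proof -
  define lower where
    "lower = zf_denom_base rho_r rho_d rho_s rho_0 T + min rho_r (alpha * (2 powr R - 1))"
  have "0 < zf_denom_base rho_r rho_d rho_s rho_0 T"
    unfolding zf_denom_base_def using assms by (simp add: add_pos_nonneg)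
  moreover have "0 < min rho_r (alpha * (2 powr R - 1))" using assms by simp
  ultimately have "0 < lower" unfolding lower_def by (rule add_pos_pos)
  moreover have "lower \<le> zf_denom M K tau R alpha rho_r rho_d rho_s rho_0 T"
    unfolding lower_def using assms by (intro zf_denom_ge_base_add_gap) simp_all
  ultimately show ?thesis
    unfolding zeta_zf_eq_divide_zf_denom lower_def[symmetric] using assms(5)
    by (intro divide_left_mono) simp_all
qed

lemma zeta_star_zf_less:
  assumes "1 < T" "0 < R" "0 < alpha" "0 < rho_r" "0 \<le> rho_d" "0 \<le> rho_s" "0 \<le> rho_0"
  shows "zeta_star_zf R alpha rho_r rho_d rho_s rho_0 T < R / zf_denom_base rho_r rho_d rho_s rho_0 T"
proof -
  define base gap where "base = zf_denom_base rho_r rho_d rho_s rho_0 T"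
    and "gap = min rho_r (alpha * (2 powr R - 1))"
  have "0 < base" unfolding base_def zf_denom_base_def using assms by (simp add: add_pos_nonneg)
  have "0 < gap" unfolding gap_def using assms by simp
  have "zeta_star_zf R alpha rho_r rho_d rho_s rho_0 T \<le> R / (base + gap)"
    unfolding zeta_star_zf_def base_def gap_def
  proof (rule cSup_least)
    show "{zeta_zf M K tau R alpha rho_r rho_d rho_s rho_0 T | M K tau :: nat.
             1 \<le> K \<and> K \<le> tau \<and> tau < T \<and> K < M} \<noteq> {}"
      using assms(1) by blast
  qed (use assms zeta_zf_le_divide_base_add_gap in blast)
  also have "\<dots> < R / base" using \<open>0 < base\<close> \<open>0 < gap\<close> assms(2) by (simp add: divide_strict_left_mono)
  finally show ?thesis unfolding base_def .
qed

lemma zeta_zf_le_zeta_star_zf: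
  assumes "1 \<le> K" "K \<le> tau" "tau < T" "K < M" "0 < R" "0 < alpha"
    and "0 < rho_r" "0 \<le> rho_d" "0 \<le> rho_s" "0 \<le> rho_0"
  shows "zeta_zf M K tau R alpha rho_r rho_d rho_s rho_0 T \<le> zeta_star_zf R alpha rho_r rho_d rho_s rho_0 T"
  unfolding zeta_star_zf_def
proof (rule cSup_upper)
  show "bdd_above {zeta_zf M K tau R alpha rho_r rho_d rho_s rho_0 T | M K tau :: nat.
          1 \<le> K \<and> K \<le> tau \<and> tau < T \<and> K < M}"
    using assms(5-) zeta_zf_le_divide_base_add_gap by (auto intro!: bdd_aboveI)
qed (use assms(1-4) in blast)

lemma zeta_star_zf_greater:
  assumes "1 \<le> tau" "tau < T" "0 < R" "0 < alpha"
    and "0 < rho_r" "0 \<le> rho_d" "0 \<le> rho_s" "0 \<le> rho_0"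
    and "alpha / (1 + real tau)
           + alpha * (1 + real tau) / real tau * (2 powr (R / (1 - real tau / real T)) - 1)
         \<le> rho_r + 2 * rho_0"
  shows "2 / 3 * (R / zf_denom_base rho_r rho_d rho_s rho_0 T) < zeta_star_zf R alpha rho_r rho_d rho_s rho_0 T"
proof -
  define base where "base = zf_denom_base rho_r rho_d rho_s rho_0 T"
  have "0 < base" unfolding base_def zf_denom_base_def using assms by (simp add: add_pos_nonneg)
  have "alpha * gamma_u 2 1 tau R T
      < alpha * (1 / (1 + real tau) + (1 + real tau) / real tau * (2 powr (R / (1 - real tau / real T)) - 1))"
    using gamma_u_2_1_less[of tau T R] assms by simp
  also have "\<dots> \<le> rho_r + 2 * rho_0" using assms(9) by (simp add: algebra_simps)
  also have "\<dots> \<le> base / 2" unfolding base_def zf_denom_base_def using assms by simp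
  finally have "zf_denom 2 1 tau R alpha rho_r rho_d rho_s rho_0 T < 3 / 2 * base"
    unfolding zf_denom_2_1 base_def by simp
  moreover have "0 < zf_denom 2 1 tau R alpha rho_r rho_d rho_s rho_0 T"
    unfolding zf_denom_2_1 base_def[symmetric]
    using \<open>0 < base\<close> gamma_u_nonneg[of 1 2 tau T R] assms by (simp add: add_nonneg_pos)
  ultimately have "R / (3 / 2 * base) < zeta_zf 2 1 tau R alpha rho_r rho_d rho_s rho_0 T"
    unfolding zeta_zf_eq_divide_zf_denom using assms(3) \<open>0 < base\<close>
    by (intro divide_strict_left_mono) simp_all
  also have "\<dots> \<le> zeta_star_zf R alpha rho_r rho_d rho_s rho_0 T"
    using assms by (intro zeta_zf_le_zeta_star_zf) simp_all
  finally show ?thesis unfolding base_def by simp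
qed

lemma nat_floor_sqrt_bounds:
  assumes "1 < T"
  shows "1 \<le> nat \<lfloor>sqrt (real T)\<rfloor>" "nat \<lfloor>sqrt (real T)\<rfloor> < T"
proof -
  have "1 < sqrt (real T)" using assms by simp
  thus "1 \<le> nat \<lfloor>sqrt (real T)\<rfloor>" by (simp add: le_nat_iff le_floor_iff)
  have "sqrt (real T) * 1 < sqrt (real T) * sqrt (real T)"
    using \<open>1 < sqrt (real T)\<close> by (intro mult_strict_left_mono) simp_all
  hence "sqrt (real T) < real T" by simp
  hence "\<lfloor>sqrt (real T)\<rfloor> < int T" by (simp add: floor_less_iff)
  thus "nat \<lfloor>sqrt (real T)\<rfloor> < T" by (simp add: nat_less_iff)
qed

theorem theorem3:
  fixes N0 B Tc Gc p_r p_d p_s C0 alpha R :: real and T :: nat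
  assumes "N0 > 0" "B > 0" "Tc > 0" "Gc > 0" "p_r > 0" "p_d > 0" "p_s > 0" "C0 > 0"
    and "alpha > 1" and "real T = B * Tc" and "T > 1" and "R > 0"
    and "Gc * p_r / (N0 * B) + 2 * (Gc * C0 / N0) \<ge>
         alpha / (1 + of_int \<lfloor>sqrt (real T)\<rfloor>)
         + alpha * (1 + of_int \<lfloor>sqrt (real T)\<rfloor>) / of_int \<lfloor>sqrt (real T)\<rfloor>
           * (2 powr (R / (1 - of_int \<lfloor>sqrt (real T)\<rfloor> / real T)) - 1)"
  shows "(let rho_r = Gc * p_r / (N0 * B); rho_d = Gc * p_d / (N0 * B);
              rho_s = Gc * p_s / (N0 * B); rho_0 = Gc * C0 / N0;
              eta = Gc / N0 * zeta_star_zf R alpha rho_r rho_d rho_s rho_0 T;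
              e = R * B / (2 * p_r + p_d + p_s + 4 * C0 * B + 32 / 3 * (C0 / Tc))
          in 2 / 3 * e < eta \<and> eta < e)"
proof -
  define rho_r rho_d rho_s rho_0 where "rho_r = Gc * p_r / (N0 * B)" and "rho_d = Gc * p_d / (N0 * B)"
    and "rho_s = Gc * p_s / (N0 * B)" and "rho_0 = Gc * C0 / N0"
  define z where "z = zeta_star_zf R alpha rho_r rho_d rho_s rho_0 T"
  define E where "E = 2 * p_r + p_d + p_s + 4 * C0 * B + 32 / 3 * (C0 / Tc)"
  define s where "s = nat \<lfloor>sqrt (real T)\<rfloor>"
  have s: "1 \<le> s" "s < T" unfolding s_def using nat_floor_sqrt_bounds[OF assms(11)] .
  have rho: "0 < rho_r" "0 < rho_d" "0 < rho_s" "0 < rho_0"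
    unfolding rho_r_def rho_d_def rho_s_def rho_0_def using assms by simp_all
  have "0 < E" unfolding E_def using assms by (simp add: add_pos_pos)
  have base: "zf_denom_base rho_r rho_d rho_s rho_0 T = Gc / (N0 * B) * E"
    unfolding zf_denom_base_def E_def rho_r_def rho_d_def rho_s_def rho_0_def assms(10)
    using assms(1-4) by (simp add: field_simps)
  have scale: "Gc / N0 * (R / zf_denom_base rho_r rho_d rho_s rho_0 T) = R * B / E"
    unfolding base using assms(1-4) \<open>0 < E\<close> by (simp add: field_simps)
  have "real s = of_int \<lfloor>sqrt (real T)\<rfloor>" unfolding s_def using s(1) by simp
  hence "alpha / (1 + real s)
           + alpha * (1 + real s) / real s * (2 powr (R / (1 - real s / real T)) - 1)
         \<le> rho_r + 2 * rho_0"
    using assms(13) unfolding rho_r_def rho_0_def by simp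
  hence lower: "2 / 3 * (R / zf_denom_base rho_r rho_d rho_s rho_0 T) < z"
    unfolding z_def using assms s rho by (intro zeta_star_zf_greater) simp_all
  have upper: "z < R / zf_denom_base rho_r rho_d rho_s rho_0 T"
    unfolding z_def using assms rho by (intro zeta_star_zf_less) simp_all
  have "0 < Gc / N0" using assms(1,4) by simp
  from mult_strict_left_mono[OF lower this] mult_strict_left_mono[OF upper this]
  have "2 / 3 * (R * B / E) < Gc / N0 * z" "Gc / N0 * z < R * B / E"
    unfolding scale [symmetric] mult.left_commute [of "Gc / N0"] .
  thus ?thesis
    unfolding Let_def rho_r_def [symmetric] rho_d_def [symmetric] rho_s_def [symmetric]
      rho_0_def [symmetric] z_def [symmetric] E_def [symmetric] by simp
qed

end
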